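(* Let $\mathbf{A}=\langle A,\wedge,\vee,\cdot,1,0,{\sim},-,'\rangle$ be a quasi relation algebra. The set $C=\{a\in A\mid {\sim}a=-a\}$ is a subuniverse of $\mathbf{A}$ (closed under $\wedge,\vee,\cdot,{\sim},-,'$ and containing $0,1$), and the resulting subalgebra is a cyclic quasi relation algebra.
   Context: An FL-algebra $\langle A,\wedge,\vee,\cdot,1,\backslash,/,0\rangle$ is a residuated lattice (a lattice $\langle A,\wedge,\vee\rangle$, a monoid $\langle A,\cdot,1\rangle$, with $a\cdot b\le c \iff a\le c/b\iff b\le a\backslash c$) together with an arbitrary constant $0$. Define ${\sim}a=a\backslash 0$, $-a=0/a$ and $a+b={\sim}(-b\cdot -a)$. It is an InFL-algebra if ${\sim}{-}a={-}{\sim}a=a$ for all $a$. A quasi relation algebra (qRA) is an InFL-algebra with a unary operation $'$ such that for all $a,b$: $a''=a$, $(a\vee b)'=a'\wedge b'$, $({\sim}a)'=-(a')$, and $(a\cdot b)'=a'+b'$; it is written in the signature $\langle A,\wedge,\vee,\cdot,1,0,{\sim},-,'\rangle$. A qRA is cyclic if ${\sim}a=-a$ for all $a$. *)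

theory Defs
  imports Main
begin

text \<open>Algebras are given by a carrier set A and operations (total functions, relativised
  to A).  The lattice order is a \<le> b iff a \<and> b = a.\<close>

definition lattice_on :: "'a set \<Rightarrow> ('a \<Rightarrow> 'a \<Rightarrow> 'a) \<Rightarrow> ('a \<Rightarrow> 'a \<Rightarrow> 'a) \<Rightarrow> bool" where
  "lattice_on A meet join \<longleftrightarrow>
     (\<forall>a\<in>A. \<forall>b\<in>A. meet a b \<in> A \<and> join a b \<in> A) \<and>
     (\<forall>a\<in>A. \<forall>b\<in>A. \<forall>c\<in>A. meet (meet a b) c = meet a (meet b c) \<and> join (join a b) c = join a (join b c)) \<and>
     (\<forall>a\<in>A. \<forall>b\<in>A. meet a b = meet b a \<and> join a b = join b a) \<and>
     (\<forall>a\<in>A. meet a a = a \<and> join a a = a) \<and>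
     (\<forall>a\<in>A. \<forall>b\<in>A. meet a (join a b) = a \<and> join a (meet a b) = a)"

definition leq :: "('a \<Rightarrow> 'a \<Rightarrow> 'a) \<Rightarrow> 'a \<Rightarrow> 'a \<Rightarrow> bool" where
  "leq meet a b \<longleftrightarrow> meet a b = a"

definition monoid_on :: "'a set \<Rightarrow> ('a \<Rightarrow> 'a \<Rightarrow> 'a) \<Rightarrow> 'a \<Rightarrow> bool" where
  "monoid_on A mult one \<longleftrightarrow> one \<in> A \<and>
     (\<forall>a\<in>A. \<forall>b\<in>A. mult a b \<in> A) \<and>
     (\<forall>a\<in>A. \<forall>b\<in>A. \<forall>c\<in>A. mult (mult a b) c = mult a (mult b c)) \<and>
     (\<forall>a\<in>A. mult one a = a \<and> mult a one = a)"

text \<open>FL-algebra \<langle>A,\<and>,\<or>,\<cdot>,1,\<setminus>,/,0\<rangle>; ldiv a c = a\<setminus>c, rdiv c b = c/b.\<close>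
definition fl_algebra :: "'a set \<Rightarrow> ('a \<Rightarrow> 'a \<Rightarrow> 'a) \<Rightarrow> ('a \<Rightarrow> 'a \<Rightarrow> 'a) \<Rightarrow> ('a \<Rightarrow> 'a \<Rightarrow> 'a) \<Rightarrow> 'a
    \<Rightarrow> ('a \<Rightarrow> 'a \<Rightarrow> 'a) \<Rightarrow> ('a \<Rightarrow> 'a \<Rightarrow> 'a) \<Rightarrow> 'a \<Rightarrow> bool" where
  "fl_algebra A meet join mult one ldiv rdiv zero \<longleftrightarrow>
     lattice_on A meet join \<and> monoid_on A mult one \<and> zero \<in> A \<and>
     (\<forall>a\<in>A. \<forall>b\<in>A. ldiv a b \<in> A \<and> rdiv a b \<in> A) \<and>
     (\<forall>a\<in>A. \<forall>b\<in>A. \<forall>c\<in>A.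
        (leq meet (mult a b) c \<longleftrightarrow> leq meet a (rdiv c b)) \<and>
        (leq meet a (rdiv c b) \<longleftrightarrow> leq meet b (ldiv a c)))"

definition infl_algebra :: "'a set \<Rightarrow> ('a \<Rightarrow> 'a \<Rightarrow> 'a) \<Rightarrow> ('a \<Rightarrow> 'a \<Rightarrow> 'a) \<Rightarrow> ('a \<Rightarrow> 'a \<Rightarrow> 'a) \<Rightarrow> 'a
    \<Rightarrow> ('a \<Rightarrow> 'a \<Rightarrow> 'a) \<Rightarrow> ('a \<Rightarrow> 'a \<Rightarrow> 'a) \<Rightarrow> 'a \<Rightarrow> bool" where
  "infl_algebra A meet join mult one ldiv rdiv zero \<longleftrightarrow>
     fl_algebra A meet join mult one ldiv rdiv zero \<and>
     (\<forall>a\<in>A. ldiv (rdiv zero a) zero = a \<and> rdiv zero (ldiv a zero) = a)"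

definition qplus :: "('a \<Rightarrow> 'a \<Rightarrow> 'a) \<Rightarrow> ('a \<Rightarrow> 'a) \<Rightarrow> ('a \<Rightarrow> 'a) \<Rightarrow> 'a \<Rightarrow> 'a \<Rightarrow> 'a" where
  "qplus mult lneg rneg a b = lneg (mult (rneg b) (rneg a))"

text \<open>Quasi relation algebra in the signature \<langle>A,\<and>,\<or>,\<cdot>,1,0,\<sim>,\<dash>,'\<rangle>: the reduct is an InFL-algebra,
  i.e. there are residuals \<setminus>, / making it one with \<sim>a = a\<setminus>0 and \<dash>a = 0/a (the residuals are
  uniquely determined by the lattice order and \<cdot>), plus the axioms for '.\<close>
definition qra :: "'a set \<Rightarrow> ('a \<Rightarrow> 'a \<Rightarrow> 'a) \<Rightarrow> ('a \<Rightarrow> 'a \<Rightarrow> 'a) \<Rightarrow> ('a \<Rightarrow> 'a \<Rightarrow> 'a) \<Rightarrow> 'a \<Rightarrow> 'a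
    \<Rightarrow> ('a \<Rightarrow> 'a) \<Rightarrow> ('a \<Rightarrow> 'a) \<Rightarrow> ('a \<Rightarrow> 'a) \<Rightarrow> bool" where
  "qra A meet join mult one zero lneg rneg pr \<longleftrightarrow>
     (\<exists>ldiv rdiv. infl_algebra A meet join mult one ldiv rdiv zero \<and>
        (\<forall>a\<in>A. lneg a = ldiv a zero \<and> rneg a = rdiv zero a)) \<and>
     (\<forall>a\<in>A. pr a \<in> A) \<and>
     (\<forall>a\<in>A. pr (pr a) = a) \<and>
     (\<forall>a\<in>A. \<forall>b\<in>A. pr (join a b) = meet (pr a) (pr b)) \<and>
     (\<forall>a\<in>A. pr (lneg a) = rneg (pr a)) \<and>
     (\<forall>a\<in>A. \<forall>b\<in>A. pr (mult a b) = qplus mult lneg rneg (pr a) (pr b))"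

definition cyclic_qra :: "'a set \<Rightarrow> ('a \<Rightarrow> 'a \<Rightarrow> 'a) \<Rightarrow> ('a \<Rightarrow> 'a \<Rightarrow> 'a) \<Rightarrow> ('a \<Rightarrow> 'a \<Rightarrow> 'a) \<Rightarrow> 'a \<Rightarrow> 'a
    \<Rightarrow> ('a \<Rightarrow> 'a) \<Rightarrow> ('a \<Rightarrow> 'a) \<Rightarrow> ('a \<Rightarrow> 'a) \<Rightarrow> bool" where
  "cyclic_qra A meet join mult one zero lneg rneg pr \<longleftrightarrow>
     qra A meet join mult one zero lneg rneg pr \<and> (\<forall>a\<in>A. lneg a = rneg a)"

definition subuniverse :: "'a set \<Rightarrow> 'a set \<Rightarrow> ('a \<Rightarrow> 'a \<Rightarrow> 'a) \<Rightarrow> ('a \<Rightarrow> 'a \<Rightarrow> 'a) \<Rightarrow> ('a \<Rightarrow> 'a \<Rightarrow> 'a)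
    \<Rightarrow> 'a \<Rightarrow> 'a \<Rightarrow> ('a \<Rightarrow> 'a) \<Rightarrow> ('a \<Rightarrow> 'a) \<Rightarrow> ('a \<Rightarrow> 'a) \<Rightarrow> bool" where
  "subuniverse C A meet join mult one zero lneg rneg pr \<longleftrightarrow>
     C \<subseteq> A \<and> one \<in> C \<and> zero \<in> C \<and>
     (\<forall>a\<in>C. \<forall>b\<in>C. meet a b \<in> C \<and> join a b \<in> C \<and> mult a b \<in> C) \<and>
     (\<forall>a\<in>C. lneg a \<in> C \<and> rneg a \<in> C \<and> pr a \<in> C)"

end

theory Submission
  imports Defs
begin

text \<open>The key observation is that \<open>a\<close> is cyclic (\<open>\<sim>a = -a\<close>) iff \<open>a z \<le> 0 \<longleftrightarrow> z a \<le> 0\<close>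
  for all \<open>z\<close>, and this "commutes with 0" property passes to products by associativity.
  Closure under \<open>\<and>, \<or>, \<sim>, -\<close> and the constants follows from the De Morgan laws and
  \<open>\<sim>1 = -1 = 0\<close>; closure under \<open>'\<close> from \<open>(-a)' = \<sim>(a')\<close>.  Finally every subuniverse of a
  quasi relation algebra is again one, because the residuals are term-definable:
  \<open>a\<setminus>b = \<sim>(-b \<cdot> a)\<close> and \<open>c/b = -(b \<cdot> \<sim>c)\<close>.\<close>

lemma lattice_on_subset:
  assumes "lattice_on A meet join" "C \<subseteq> A"
    and "\<And>a b. a \<in> C \<Longrightarrow> b \<in> C \<Longrightarrow> meet a b \<in> C \<and> join a b \<in> C"
  shows "lattice_on C meet join"
  using assms(3) assms(1)[unfolded lattice_on_def] subsetD[OF assms(2)]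
  unfolding lattice_on_def by (intro conjI ballI; metis)

lemma monoid_on_subset:
  assumes "monoid_on A mult one" "C \<subseteq> A" "one \<in> C"
    and "\<And>a b. a \<in> C \<Longrightarrow> b \<in> C \<Longrightarrow> mult a b \<in> C"
  shows "monoid_on C mult one"
  using assms(3,4) assms(1)[unfolded monoid_on_def] subsetD[OF assms(2)]
  unfolding monoid_on_def by (intro conjI ballI; metis)

lemma infl_algebra_subset:
  assumes infl: "infl_algebra A meet join mult one ldiv rdiv zero" and "C \<subseteq> A" "one \<in> C" "zero \<in> C"
    and closed: "\<And>a b. a \<in> C \<Longrightarrow> b \<in> C \<Longrightarrow> meet a b \<in> C \<and> join a b \<in> C \<and> mult a b \<in> C"
    and residuals_closed: "\<And>a b. a \<in> C \<Longrightarrow> b \<in> C \<Longrightarrow> ldiv a b \<in> C \<and> rdiv a b \<in> C"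
  shows "infl_algebra C meet join mult one ldiv rdiv zero"
proof -
  have "lattice_on C meet join" "monoid_on C mult one"
    using infl closed \<open>C \<subseteq> A\<close> \<open>one \<in> C\<close> lattice_on_subset monoid_on_subset
    unfolding infl_algebra_def fl_algebra_def by metis+
  with infl residuals_closed \<open>zero \<in> C\<close> subsetD[OF \<open>C \<subseteq> A\<close>] show ?thesis
    unfolding infl_algebra_def fl_algebra_def by (intro conjI ballI; metis)
qed

locale infl_negations =
  fixes A :: "'a set" and meet join mult :: "'a \<Rightarrow> 'a \<Rightarrow> 'a" and one zero :: 'a
    and ldiv rdiv :: "'a \<Rightarrow> 'a \<Rightarrow> 'a" and lneg rneg :: "'a \<Rightarrow> 'a"
  assumes infl: "infl_algebra A meet join mult one ldiv rdiv zero"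
    and lneg_eq: "a \<in> A \<Longrightarrow> lneg a = ldiv a zero"
    and rneg_eq: "a \<in> A \<Longrightarrow> rneg a = rdiv zero a"
begin

lemma fl: "fl_algebra A meet join mult one ldiv rdiv zero"
  using infl unfolding infl_algebra_def by blast

lemma lattice: "lattice_on A meet join"
  using fl unfolding fl_algebra_def by blast

lemma monoid: "monoid_on A mult one"
  using fl unfolding fl_algebra_def by blast

lemma meet_closed [simp]: "a \<in> A \<Longrightarrow> b \<in> A \<Longrightarrow> meet a b \<in> A"
  and join_closed [simp]: "a \<in> A \<Longrightarrow> b \<in> A \<Longrightarrow> join a b \<in> A"
  and meet_assoc: "a \<in> A \<Longrightarrow> b \<in> A \<Longrightarrow> c \<in> A \<Longrightarrow> meet (meet a b) c = meet a (meet b c)"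
  and join_assoc: "a \<in> A \<Longrightarrow> b \<in> A \<Longrightarrow> c \<in> A \<Longrightarrow> join (join a b) c = join a (join b c)"
  and meet_comm: "a \<in> A \<Longrightarrow> b \<in> A \<Longrightarrow> meet a b = meet b a"
  and join_comm: "a \<in> A \<Longrightarrow> b \<in> A \<Longrightarrow> join a b = join b a"
  and meet_idem: "a \<in> A \<Longrightarrow> meet a a = a"
  and meet_absorb: "a \<in> A \<Longrightarrow> b \<in> A \<Longrightarrow> meet a (join a b) = a"
  and join_absorb: "a \<in> A \<Longrightarrow> b \<in> A \<Longrightarrow> join a (meet a b) = a"
  using lattice unfolding lattice_on_def by blast+

lemma one_closed [simp]: "one \<in> A"
  and mult_closed [simp]: "a \<in> A \<Longrightarrow> b \<in> A \<Longrightarrow> mult a b \<in> A"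
  and mult_assoc: "a \<in> A \<Longrightarrow> b \<in> A \<Longrightarrow> c \<in> A \<Longrightarrow> mult (mult a b) c = mult a (mult b c)"
  and mult_one_left [simp]: "a \<in> A \<Longrightarrow> mult one a = a"
  and mult_one_right [simp]: "a \<in> A \<Longrightarrow> mult a one = a"
  using monoid unfolding monoid_on_def by blast+

lemma zero_closed [simp]: "zero \<in> A"
  and ldiv_closed [simp]: "a \<in> A \<Longrightarrow> b \<in> A \<Longrightarrow> ldiv a b \<in> A"
  and rdiv_closed [simp]: "a \<in> A \<Longrightarrow> b \<in> A \<Longrightarrow> rdiv a b \<in> A"
  and residuation_right: "a \<in> A \<Longrightarrow> b \<in> A \<Longrightarrow> c \<in> A \<Longrightarrow>
        leq meet (mult a b) c \<longleftrightarrow> leq meet a (rdiv c b)"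
  and residuation_left: "a \<in> A \<Longrightarrow> b \<in> A \<Longrightarrow> c \<in> A \<Longrightarrow>
        leq meet (mult a b) c \<longleftrightarrow> leq meet b (ldiv a c)"
  using fl unfolding fl_algebra_def by blast+

lemma lneg_closed [simp]: "a \<in> A \<Longrightarrow> lneg a \<in> A"
  and rneg_closed [simp]: "a \<in> A \<Longrightarrow> rneg a \<in> A"
  by (simp_all add: lneg_eq rneg_eq)

lemma lneg_rneg [simp]: "a \<in> A \<Longrightarrow> lneg (rneg a) = a"
  and rneg_lneg [simp]: "a \<in> A \<Longrightarrow> rneg (lneg a) = a"
  using infl by (simp_all add: infl_algebra_def lneg_eq rneg_eq)

lemma leq_antisym: "a \<in> A \<Longrightarrow> b \<in> A \<Longrightarrow> leq meet a b \<Longrightarrow> leq meet b a \<Longrightarrow> a = b"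
  unfolding leq_def by (metis meet_comm)

lemma leq_trans: "a \<in> A \<Longrightarrow> b \<in> A \<Longrightarrow> c \<in> A \<Longrightarrow> leq meet a b \<Longrightarrow> leq meet b c \<Longrightarrow> leq meet a c"
  unfolding leq_def by (metis meet_assoc)

lemma eq_iff_same_lower_bounds:
  assumes "x \<in> A" "y \<in> A" and "\<And>z. z \<in> A \<Longrightarrow> leq meet z x \<longleftrightarrow> leq meet z y"
  shows "x = y"
  using assms leq_antisym meet_idem unfolding leq_def by metis

lemma leq_meet_iff:
  assumes "z \<in> A" "a \<in> A" "b \<in> A"
  shows "leq meet z (meet a b) \<longleftrightarrow> leq meet z a \<and> leq meet z b"
proof
  have "leq meet (meet a b) a" "leq meet (meet a b) b"
    using assms unfolding leq_def by (metis meet_assoc meet_comm meet_idem)+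
  then show "leq meet z (meet a b) \<Longrightarrow> leq meet z a \<and> leq meet z b"
    using assms leq_trans by (meson meet_closed)
next
  assume "leq meet z a \<and> leq meet z b"
  then show "leq meet z (meet a b)"
    using assms meet_assoc unfolding leq_def by metis
qed

lemma leq_join_iff:
  assumes "c \<in> A" "a \<in> A" "b \<in> A"
  shows "leq meet (join a b) c \<longleftrightarrow> leq meet a c \<and> leq meet b c"
proof
  have "leq meet a (join a b)" "leq meet b (join a b)"
    using assms meet_absorb join_comm unfolding leq_def by metis+
  then show "leq meet (join a b) c \<Longrightarrow> leq meet a c \<and> leq meet b c"
    using assms leq_trans by (meson join_closed)
next
  have join_eq: "join x y = y" if "x \<in> A" "y \<in> A" "leq meet x y" for x y
    using that join_absorb meet_comm join_comm unfolding leq_def by metis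
  assume "leq meet a c \<and> leq meet b c"
  then have "join (join a b) c = c"
    using assms join_assoc join_eq by simp
  then show "leq meet (join a b) c"
    using assms meet_absorb unfolding leq_def by (metis join_closed)
qed

lemma leq_lneg_iff: "x \<in> A \<Longrightarrow> y \<in> A \<Longrightarrow> leq meet x (lneg y) \<longleftrightarrow> leq meet (mult y x) zero"
  by (simp add: residuation_left lneg_eq)

lemma leq_rneg_iff: "x \<in> A \<Longrightarrow> y \<in> A \<Longrightarrow> leq meet y (rneg x) \<longleftrightarrow> leq meet (mult y x) zero"
  by (simp add: residuation_right rneg_eq)

lemma lneg_join: "a \<in> A \<Longrightarrow> b \<in> A \<Longrightarrow> lneg (join a b) = meet (lneg a) (lneg b)"
  by (rule eq_iff_same_lower_bounds)
    (simp_all add: leq_lneg_iff leq_rneg_iff[symmetric] leq_meet_iff leq_join_iff)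

lemma rneg_join: "a \<in> A \<Longrightarrow> b \<in> A \<Longrightarrow> rneg (join a b) = meet (rneg a) (rneg b)"
  by (rule eq_iff_same_lower_bounds)
    (simp_all add: leq_rneg_iff leq_lneg_iff[symmetric] leq_meet_iff leq_join_iff)

lemma lneg_meet:
  assumes "a \<in> A" "b \<in> A"
  shows "lneg (meet a b) = join (lneg a) (lneg b)"
proof -
  have "meet a b = rneg (join (lneg a) (lneg b))"
    using assms by (simp add: rneg_join)
  then show ?thesis
    using assms by simp
qed

lemma rneg_meet:
  assumes "a \<in> A" "b \<in> A"
  shows "rneg (meet a b) = join (rneg a) (rneg b)"
proof -
  have "meet a b = lneg (join (rneg a) (rneg b))"
    using assms by (simp add: lneg_join)
  then show ?thesis
    using assms by simp
qed

lemma lneg_one: "lneg one = zero"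
  by (rule eq_iff_same_lower_bounds) (simp_all add: leq_lneg_iff)

lemma rneg_one: "rneg one = zero"
  by (rule eq_iff_same_lower_bounds) (simp_all add: leq_rneg_iff)

lemma lneg_zero: "lneg zero = one"
  using rneg_one lneg_rneg[of one] by simp

lemma rneg_zero: "rneg zero = one"
  using lneg_one rneg_lneg[of one] by simp

lemma ldiv_eq_lneg:
  assumes "a \<in> A" "b \<in> A"
  shows "ldiv a b = lneg (mult (rneg b) a)"
proof (rule eq_iff_same_lower_bounds)
  fix z assume "z \<in> A"
  with assms have "leq meet z (ldiv a b) \<longleftrightarrow> leq meet (mult a z) (lneg (rneg b))"
    by (simp add: residuation_left)
  also have "\<dots> \<longleftrightarrow> leq meet (mult (mult (rneg b) a) z) zero"
    using \<open>z \<in> A\<close> assms leq_lneg_iff[of "mult a z" "rneg b"] by (simp add: mult_assoc)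
  also have "\<dots> \<longleftrightarrow> leq meet z (lneg (mult (rneg b) a))"
    using \<open>z \<in> A\<close> assms by (simp add: leq_lneg_iff)
  finally show "leq meet z (ldiv a b) \<longleftrightarrow> leq meet z (lneg (mult (rneg b) a))" .
qed (use assms in simp_all)

lemma rdiv_eq_rneg:
  assumes "c \<in> A" "b \<in> A"
  shows "rdiv c b = rneg (mult b (lneg c))"
proof (rule eq_iff_same_lower_bounds)
  fix z assume "z \<in> A"
  with assms have "leq meet z (rdiv c b) \<longleftrightarrow> leq meet (mult z b) (rneg (lneg c))"
    by (simp add: residuation_right)
  also have "\<dots> \<longleftrightarrow> leq meet (mult z (mult b (lneg c))) zero"
    using \<open>z \<in> A\<close> assms leq_rneg_iff[of "lneg c" "mult z b"] by (simp add: mult_assoc)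
  also have "\<dots> \<longleftrightarrow> leq meet z (rneg (mult b (lneg c)))"
    using \<open>z \<in> A\<close> assms by (simp add: leq_rneg_iff)
  finally show "leq meet z (rdiv c b) \<longleftrightarrow> leq meet z (rneg (mult b (lneg c)))" .
qed (use assms in simp_all)

lemma infl_algebra_subset_negations:
  assumes "C \<subseteq> A" "one \<in> C" "zero \<in> C"
    and "\<And>a b. a \<in> C \<Longrightarrow> b \<in> C \<Longrightarrow> meet a b \<in> C \<and> join a b \<in> C \<and> mult a b \<in> C"
    and "\<And>a. a \<in> C \<Longrightarrow> lneg a \<in> C \<and> rneg a \<in> C"
  shows "infl_algebra C meet join mult one ldiv rdiv zero"
proof (rule infl_algebra_subset[OF infl assms(1-4)])
  fix a b assume "a \<in> C" "b \<in> C"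
  with assms show "ldiv a b \<in> C \<and> rdiv a b \<in> C"
    by (simp add: subsetD ldiv_eq_lneg rdiv_eq_rneg)
qed

definition cyclic_elements :: "'a set" where
  "cyclic_elements = {a \<in> A. lneg a = rneg a}"

lemma cyclic_elements_subset: "cyclic_elements \<subseteq> A"
  unfolding cyclic_elements_def by blast

lemma cyclic_iff_zero_commuting:
  assumes "a \<in> A"
  shows "lneg a = rneg a \<longleftrightarrow> (\<forall>z\<in>A. leq meet (mult a z) zero \<longleftrightarrow> leq meet (mult z a) zero)"
proof
  show "lneg a = rneg a \<Longrightarrow> \<forall>z\<in>A. leq meet (mult a z) zero \<longleftrightarrow> leq meet (mult z a) zero"
    using assms leq_lneg_iff leq_rneg_iff by metis
  show "\<forall>z\<in>A. leq meet (mult a z) zero \<longleftrightarrow> leq meet (mult z a) zero \<Longrightarrow> lneg a = rneg a"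
    by (rule eq_iff_same_lower_bounds) (use assms in \<open>simp_all add: leq_lneg_iff leq_rneg_iff\<close>)
qed

lemma cyclic_mult:
  assumes "a \<in> cyclic_elements" "b \<in> cyclic_elements"
  shows "mult a b \<in> cyclic_elements"
proof -
  have A: "a \<in> A" "b \<in> A"
    using assms unfolding cyclic_elements_def by auto
  have a: "leq meet (mult a z) zero \<longleftrightarrow> leq meet (mult z a) zero"
    and b: "leq meet (mult b z) zero \<longleftrightarrow> leq meet (mult z b) zero" if "z \<in> A" for z
    using assms that A cyclic_iff_zero_commuting unfolding cyclic_elements_def by blast+
  have "leq meet (mult (mult a b) z) zero \<longleftrightarrow> leq meet (mult z (mult a b)) zero" if "z \<in> A" for z
  proof -
    have "leq meet (mult (mult a b) z) zero \<longleftrightarrow> leq meet (mult (mult b z) a) zero"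
      using A that a[of "mult b z"] by (simp add: mult_assoc)
    also have "\<dots> \<longleftrightarrow> leq meet (mult (mult z a) b) zero"
      using A that b[of "mult z a"] by (simp add: mult_assoc)
    finally show ?thesis
      using A that by (simp add: mult_assoc)
  qed
  then show ?thesis
    using A cyclic_iff_zero_commuting unfolding cyclic_elements_def by simp
qed

lemma cyclic_join: "a \<in> cyclic_elements \<Longrightarrow> b \<in> cyclic_elements \<Longrightarrow> join a b \<in> cyclic_elements"
  unfolding cyclic_elements_def by (auto simp: lneg_join rneg_join)

lemma cyclic_meet: "a \<in> cyclic_elements \<Longrightarrow> b \<in> cyclic_elements \<Longrightarrow> meet a b \<in> cyclic_elements"
  unfolding cyclic_elements_def by (auto simp: lneg_meet rneg_meet)

lemma cyclic_lneg:
  assumes "a \<in> cyclic_elements"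
  shows "lneg a \<in> cyclic_elements"
proof -
  have "a \<in> A" "lneg a = rneg a"
    using assms unfolding cyclic_elements_def by auto
  then have "lneg (lneg a) = rneg (lneg a)"
    by (metis lneg_rneg rneg_lneg)
  with \<open>a \<in> A\<close> show ?thesis
    unfolding cyclic_elements_def by simp
qed

lemma cyclic_rneg:
  assumes "a \<in> cyclic_elements"
  shows "rneg a \<in> cyclic_elements"
proof -
  have "a \<in> A" "lneg a = rneg a"
    using assms unfolding cyclic_elements_def by auto
  then have "lneg (rneg a) = rneg (rneg a)"
    by (metis lneg_rneg rneg_lneg)
  with \<open>a \<in> A\<close> show ?thesis
    unfolding cyclic_elements_def by simp
qed

lemma cyclic_one: "one \<in> cyclic_elements"
  unfolding cyclic_elements_def by (simp add: lneg_one rneg_one)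

lemma cyclic_zero: "zero \<in> cyclic_elements"
  unfolding cyclic_elements_def by (simp add: lneg_zero rneg_zero)

end

lemma qra_infl_negations:
  assumes "qra A meet join mult one zero lneg rneg pr"
  obtains ldiv rdiv where "infl_negations A meet join mult one zero ldiv rdiv lneg rneg"
  using assms unfolding qra_def infl_negations_def by blast

lemma qra_subuniverse:
  assumes qra: "qra A meet join mult one zero lneg rneg pr"
    and sub: "subuniverse C A meet join mult one zero lneg rneg pr"
  shows "qra C meet join mult one zero lneg rneg pr"
proof -
  obtain ldiv rdiv where "infl_negations A meet join mult one zero ldiv rdiv lneg rneg"
    using qra by (rule qra_infl_negations)
  then interpret infl_negations A meet join mult one zero ldiv rdiv lneg rneg .
  have C_A: "C \<subseteq> A" and "one \<in> C" "zero \<in> C"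
    and "\<And>a b. a \<in> C \<Longrightarrow> b \<in> C \<Longrightarrow> meet a b \<in> C \<and> join a b \<in> C \<and> mult a b \<in> C"
    and "\<And>a. a \<in> C \<Longrightarrow> lneg a \<in> C \<and> rneg a \<in> C"
    using sub unfolding subuniverse_def by simp_all
  then have "infl_algebra C meet join mult one ldiv rdiv zero"
    by (rule infl_algebra_subset_negations)
  moreover have "\<forall>a\<in>C. lneg a = ldiv a zero \<and> rneg a = rdiv zero a"
    using C_A lneg_eq rneg_eq by blast
  ultimately have "\<exists>ldiv rdiv. infl_algebra C meet join mult one ldiv rdiv zero \<and>
      (\<forall>a\<in>C. lneg a = ldiv a zero \<and> rneg a = rdiv zero a)"
    by blast
  moreover have "\<forall>a\<in>C. pr a \<in> C"
    using sub unfolding subuniverse_def by simp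
  moreover have "\<forall>a\<in>A. pr (pr a) = a"
    "\<forall>a\<in>A. \<forall>b\<in>A. pr (join a b) = meet (pr a) (pr b)"
    "\<forall>a\<in>A. pr (lneg a) = rneg (pr a)"
    "\<forall>a\<in>A. \<forall>b\<in>A. pr (mult a b) = qplus mult lneg rneg (pr a) (pr b)"
    using qra unfolding qra_def by blast+
  ultimately show ?thesis
    using C_A unfolding qra_def by blast
qed

lemma qra_pr_rneg:
  assumes qra: "qra A meet join mult one zero lneg rneg pr" and "a \<in> A"
  shows "pr (rneg a) = lneg (pr a)"
proof -
  obtain ldiv rdiv where "infl_negations A meet join mult one zero ldiv rdiv lneg rneg"
    using qra by (rule qra_infl_negations)
  then interpret infl_negations A meet join mult one zero ldiv rdiv lneg rneg .
  have pr_closed: "pr b \<in> A" and pr_lneg: "pr (lneg b) = rneg (pr b)" if "b \<in> A" for b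
    using qra that unfolding qra_def by blast+
  have "pr a = rneg (pr (rneg a))"
    using pr_lneg[of "rneg a"] \<open>a \<in> A\<close> by simp
  then show ?thesis
    using pr_closed[of "rneg a"] \<open>a \<in> A\<close> by simp
qed

lemma qra_pr_preserves_cyclic:
  assumes qra: "qra A meet join mult one zero lneg rneg pr" and "a \<in> A" "lneg a = rneg a"
  shows "lneg (pr a) = rneg (pr a)"
proof -
  have "rneg (pr a) = pr (lneg a)"
    using qra \<open>a \<in> A\<close> unfolding qra_def by simp
  also have "\<dots> = lneg (pr a)"
    using qra_pr_rneg[OF qra \<open>a \<in> A\<close>] \<open>lneg a = rneg a\<close> by simp
  finally show ?thesis ..
qed

theorem proposition2p4:
  fixes A :: "'a set" and meet join mult :: "'a \<Rightarrow> 'a \<Rightarrow> 'a" and one zero :: 'a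
    and lneg rneg pr :: "'a \<Rightarrow> 'a"
  assumes "qra A meet join mult one zero lneg rneg pr"
  defines "C \<equiv> {a \<in> A. lneg a = rneg a}"
  shows "subuniverse C A meet join mult one zero lneg rneg pr \<and>
         cyclic_qra C meet join mult one zero lneg rneg pr"
proof -
  obtain ldiv rdiv where "infl_negations A meet join mult one zero ldiv rdiv lneg rneg"
    using assms(1) by (rule qra_infl_negations)
  then interpret infl_negations A meet join mult one zero ldiv rdiv lneg rneg .
  have pr_cyclic: "pr a \<in> cyclic_elements" if "a \<in> cyclic_elements" for a
  proof -
    have "a \<in> A" "lneg a = rneg a"
      using that unfolding cyclic_elements_def by auto
    moreover have "pr a \<in> A"
      using assms(1) \<open>a \<in> A\<close> unfolding qra_def by blast
    ultimately show ?thesis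
      using qra_pr_preserves_cyclic[OF assms(1)] unfolding cyclic_elements_def by blast
  qed
  have sub: "subuniverse cyclic_elements A meet join mult one zero lneg rneg pr"
    unfolding subuniverse_def
    by (simp add: cyclic_elements_subset cyclic_one cyclic_zero cyclic_meet cyclic_join
        cyclic_mult cyclic_lneg cyclic_rneg pr_cyclic)
  then have "qra cyclic_elements meet join mult one zero lneg rneg pr"
    using assms(1) by (rule qra_subuniverse[rotated])
  moreover have "C = cyclic_elements"
    unfolding C_def cyclic_elements_def ..
  ultimately show ?thesis
    using sub unfolding cyclic_qra_def cyclic_elements_def by simp
qed

end
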